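(* Let $A$ be a set of $n$ real numbers, let $\delta_0 \ge 0$, and let $\ell_1, \dots, \ell_K$ be lines in $\mathbb{R}^2$ of the form $y = \lambda_i x + \mu_i$ with $\lambda_i \neq 0$, each of which satisfies $|\ell_i \cap (A \times A)| \ge n^{1-\delta_0}$. Then at least $K^2 n^{-2\delta_0}/2$ of the ordered pairs $(i,j) \in \{1,\dots,K\}^2$ satisfy $$|Y(\ell_i) \cap Y(\ell_j)| \ge n^{1-2\delta_0}/2.$$
   Context: For a line $\ell$, $Y(\ell)$ denotes the projection of $\ell \cap (A \times A)$ onto the $y$-axis, i.e. $Y(\ell) = \{ y : (x,y) \in \ell \cap (A\times A) \text{ for some } x\}$. *)

theory Defs
  imports Complex_Main
begin

definition line :: "real \<Rightarrow> real \<Rightarrow> (real \<times> real) set" where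
  "line lam mu = {(x, y). y = lam * x + mu}"

definition Yproj :: "real set \<Rightarrow> (real \<times> real) set \<Rightarrow> real set" where
  "Yproj A l = {y. \<exists>x. (x, y) \<in> l \<inter> (A \<times> A)}"

end

theory Submission
  imports Defs "HOL-Analysis.Convex"
begin

text \<open>Since \<open>lam i \<noteq> 0\<close>, projecting \<open>line (lam i) (mu i) \<inter> (A \<times> A)\<close> to the y-axis is
  injective, so each \<open>Y i\<close> is a subset of \<open>A\<close> with at least \<open>m = n powr (1 - \<delta>0)\<close> elements.
  Double counting gives \<open>\<Sum>(i, j). card (Y i \<inter> Y j) = \<Sum>y\<in>A. d y ^ 2\<close>, where \<open>d y\<close> is the number
  of \<open>i\<close> with \<open>y \<in> Y i\<close>, and by Cauchy--Schwarz this is at least \<open>(K * m)\<^sup>2 / n\<close>. The pairs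
  with \<open>card (Y i \<inter> Y j) < m\<^sup>2 / (2 * n)\<close> contribute less than \<open>K\<^sup>2 * m\<^sup>2 / (2 * n)\<close> to this
  sum and every other pair at most \<open>n\<close>, so at least \<open>K\<^sup>2 * m\<^sup>2 / (2 * n\<^sup>2)\<close> pairs are large.\<close>

lemma sum_card_eq_sum_card_containing:
  assumes "finite A" and "finite I" and "\<And>i. i \<in> I \<Longrightarrow> Y i \<subseteq> A"
  shows "(\<Sum>i\<in>I. card (Y i)) = (\<Sum>y\<in>A. card {i\<in>I. y \<in> Y i})"
proof -
  have "(\<Sum>i\<in>I. card (Y i)) = (\<Sum>i\<in>I. \<Sum>y\<in>A. of_bool (y \<in> Y i))"
    using assms by (intro sum.cong refl) (simp add: Int_absorb1)
  also have "\<dots> = (\<Sum>y\<in>A. \<Sum>i\<in>I. of_bool (y \<in> Y i))"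
    by (rule sum.swap)
  also have "\<dots> = (\<Sum>y\<in>A. card {i\<in>I. y \<in> Y i})"
    using assms(2) by (simp add: Collect_conj_eq Int_commute)
  finally show ?thesis .
qed

lemma sum_card_Int_eq_sum_square_card_containing:
  assumes "finite A" and "finite I" and "\<And>i. i \<in> I \<Longrightarrow> Y i \<subseteq> A"
  shows "(\<Sum>(i, j)\<in>I \<times> I. card (Y i \<inter> Y j)) = (\<Sum>y\<in>A. (card {i\<in>I. y \<in> Y i})\<^sup>2)"
proof -
  have "(\<Sum>(i, j)\<in>I \<times> I. card (Y i \<inter> Y j))
      = (\<Sum>y\<in>A. card {p\<in>I \<times> I. y \<in> Y (fst p) \<inter> Y (snd p)})"
    using assms sum_card_eq_sum_card_containing[of A "I \<times> I" "\<lambda>p. Y (fst p) \<inter> Y (snd p)"]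
    by (force simp: case_prod_beta')
  also have "\<dots> = (\<Sum>y\<in>A. card ({i\<in>I. y \<in> Y i} \<times> {i\<in>I. y \<in> Y i}))"
    by (intro sum.cong refl arg_cong[where f = card]) auto
  finally show ?thesis
    by (simp add: card_cartesian_product power2_eq_square)
qed

lemma sum_le_card_large_plus:
  fixes f :: "'a \<Rightarrow> real"
  assumes "finite S" and "\<And>p. p \<in> S \<Longrightarrow> f p \<le> M" and "t \<ge> 0"
  shows "(\<Sum>p\<in>S. f p) \<le> M * card {p\<in>S. t \<le> f p} + t * card S"
proof -
  let ?L = "{p\<in>S. t \<le> f p}"
  have "(\<Sum>p\<in>S. f p) = (\<Sum>p\<in>?L. f p) + (\<Sum>p\<in>S - ?L. f p)"
    using assms(1) by (simp add: sum.subset_diff[of ?L S])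
  also have "\<dots> \<le> (\<Sum>p\<in>?L. M) + (\<Sum>p\<in>S - ?L. t)"
    using assms(2) by (intro add_mono sum_mono) auto
  also have "\<dots> = M * card ?L + t * card (S - ?L)"
    by simp
  also have "\<dots> \<le> M * card ?L + t * card S"
    using assms by (intro add_left_mono mult_left_mono) (auto intro: card_mono)
  finally show ?thesis .
qed

lemma card_pairs_large_Int_ge:
  fixes Y :: "'i \<Rightarrow> 'a set" and m :: real
  assumes "finite A" and "finite I" and "\<And>i. i \<in> I \<Longrightarrow> Y i \<subseteq> A"
    and "\<And>i. i \<in> I \<Longrightarrow> m \<le> card (Y i)" and "m \<ge> 0"
  shows "real (card {(i, j)\<in>I \<times> I. m\<^sup>2 / (2 * real (card A)) \<le> real (card (Y i \<inter> Y j))})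
           \<ge> (real (card I))\<^sup>2 * (m / real (card A))\<^sup>2 / 2"
proof (cases "A = {}")
  case True
  then show ?thesis by simp
next
  case False
  define n where "n = real (card A)"
  define t where "t = m\<^sup>2 / (2 * n)"
  define P where "P = {(i, j)\<in>I \<times> I. t \<le> card (Y i \<inter> Y j)}"
  have n_pos: "n > 0"
    using False assms(1) by (simp add: n_def card_gt_0_iff)
  have "card I * m \<le> (\<Sum>i\<in>I. real (card (Y i)))"
    using sum_mono[of I "\<lambda>_. m", OF assms(4)] by simp
  then have "(card I * m)\<^sup>2 \<le> (\<Sum>i\<in>I. real (card (Y i)))\<^sup>2"
    using assms(5) by (intro power_mono) simp_all
  also have "\<dots> = (\<Sum>y\<in>A. real (card {i\<in>I. y \<in> Y i}))\<^sup>2"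
    using sum_card_eq_sum_card_containing[of A I Y, OF assms(1-3)] by (simp flip: of_nat_sum)
  also have "\<dots> \<le> n * (\<Sum>y\<in>A. (real (card {i\<in>I. y \<in> Y i}))\<^sup>2)"
    using sum_squared_le_sum_of_squares by (simp add: n_def mult.commute)
  also have "\<dots> = n * (\<Sum>(i, j)\<in>I \<times> I. real (card (Y i \<inter> Y j)))"
    using sum_card_Int_eq_sum_square_card_containing[of A I Y, OF assms(1-3)]
    by (simp add: split_beta flip: of_nat_sum of_nat_power)
  also have "\<dots> \<le> n * (n * card P + t * card (I \<times> I))"
  proof (intro mult_left_mono)
    have "(\<lambda>(i, j). real (card (Y i \<inter> Y j))) p \<le> n" if "p \<in> I \<times> I" for p
      using that assms(1,3) by (auto simp: n_def intro!: card_mono; blast)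
    moreover have "t \<ge> 0"
      using n_pos by (simp add: t_def)
    moreover have "P = {p\<in>I \<times> I. t \<le> (\<lambda>(i, j). real (card (Y i \<inter> Y j))) p}"
      by (auto simp: P_def)
    ultimately show "(\<Sum>(i, j)\<in>I \<times> I. real (card (Y i \<inter> Y j))) \<le> n * card P + t * card (I \<times> I)"
      using sum_le_card_large_plus[of "I \<times> I" "\<lambda>(i, j). real (card (Y i \<inter> Y j))" n t] assms(2)
      by simp
  qed (use n_pos in simp)
  finally have "(card I)\<^sup>2 * m\<^sup>2 \<le> n * (n * card P + t * (card I)\<^sup>2)"
    by (simp add: card_cartesian_product power2_eq_square algebra_simps)
  then have "(card I)\<^sup>2 * m\<^sup>2 / 2 \<le> n\<^sup>2 * card P"
    using n_pos by (simp add: t_def field_simps power2_eq_square)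
  then show ?thesis
    using n_pos by (simp add: P_def t_def n_def field_simps)
qed

lemma Yproj_subset: "Yproj A l \<subseteq> A"
  by (auto simp: Yproj_def)

lemma card_Yproj_line:
  assumes "lam \<noteq> 0"
  shows "card (Yproj A (line lam mu)) = card (line lam mu \<inter> (A \<times> A))"
proof -
  have "Yproj A (line lam mu) = snd ` (line lam mu \<inter> (A \<times> A))"
    unfolding Yproj_def by force
  moreover have "inj_on snd (line lam mu \<inter> (A \<times> A))"
    using assms by (auto simp: inj_on_def line_def)
  ultimately show ?thesis
    by (simp add: card_image)
qed

theorem lemma1:
  fixes A :: "real set" and n K :: nat and \<delta>0 :: real and lam mu :: "nat \<Rightarrow> real"
  assumes "finite A" and "card A = n" and "\<delta>0 \<ge> 0"
    and "\<forall>i\<in>{1..K}. lam i \<noteq> 0"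
    and "\<forall>i\<in>{1..K}. real (card (line (lam i) (mu i) \<inter> (A \<times> A))) \<ge> real n powr (1 - \<delta>0)"
  shows "real (card {(i, j) \<in> {1..K} \<times> {1..K}.
            real (card (Yproj A (line (lam i) (mu i)) \<inter> Yproj A (line (lam j) (mu j))))
              \<ge> real n powr (1 - 2 * \<delta>0) / 2})
         \<ge> (real K)\<^sup>2 * real n powr (- 2 * \<delta>0) / 2"
proof -
  define m where "m = real n powr (1 - \<delta>0)"
  have m_square: "m\<^sup>2 = real n powr (2 - 2 * \<delta>0)"
    unfolding m_def power2_eq_square powr_add[symmetric] by (simp add: algebra_simps)
  have "real n * real n powr (1 - 2 * \<delta>0) = real n powr (2 - 2 * \<delta>0)"
    and "real n * (real n * real n powr (- 2 * \<delta>0)) = real n powr (2 - 2 * \<delta>0)"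
    by (simp_all add: powr_mult_base algebra_simps)
  then have threshold: "m\<^sup>2 / (2 * real n) = real n powr (1 - 2 * \<delta>0) / 2"
    and bound: "(m / real n)\<^sup>2 = real n powr (- 2 * \<delta>0)"
    unfolding power_divide m_square by (cases "n = 0"; simp add: field_simps power2_eq_square)+
  have "real (card {(i, j)\<in>{1..K} \<times> {1..K}.
          m\<^sup>2 / (2 * real (card A))
            \<le> real (card (Yproj A (line (lam i) (mu i)) \<inter> Yproj A (line (lam j) (mu j))))})
        \<ge> (real (card {1..K}))\<^sup>2 * (m / real (card A))\<^sup>2 / 2"
    using assms by (intro card_pairs_large_Int_ge) (auto simp: m_def Yproj_subset card_Yproj_line)
  then show ?thesis
    using assms(2) by (simp only: threshold bound card_atLeastAtMost diff_Suc_1)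
qed

end
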